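(* Consider an instance of the rental-harmony problem with $k$ roommates and $k-1$ rooms (satisfying the assumptions in the context). Then there exists a division of the rent such that, no matter which one roommate is kicked out, there is an envy-free assignment of the $k-1$ rooms to the remaining $k-1$ roommates, i.e., a bijection between rooms and remaining roommates in which each roommate receives one of her preferred rooms for that rent division.
   Context: A fixed total rent is to be divided among the rooms: a rent division is an assignment of a nonnegative price to each room, the prices summing to the total rent. For each rent division, each roommate has a nonempty set of preferred rooms (she may prefer several). Assumptions: (i) a roommate will not envy the others if she gets a room for free, i.e., in any rent division, any room whose price is zero is among the preferred rooms of each roommate; (ii) closedness: if a roommate prefers a given room for every rent division of a converging sequence of rent divisions, she also prefers that room for the limit rent division. An assignment of rooms to roommates is envy-free if each roommate receives one of her preferred rooms. *)

theory Defs
  imports "HOL-Analysis.Analysis"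
begin

text \<open>A rent division of total rent R is a price vector
  p :: nat => real, nonnegative on the rooms, summing to R over the rooms, and
  (by convention, so that it is a genuine n-dimensional object) zero outside the rooms.\<close>
definition rent_division :: "nat \<Rightarrow> real \<Rightarrow> (nat \<Rightarrow> real) \<Rightarrow> bool" where
  "rent_division n R p \<longleftrightarrow>
     (\<forall>j<n. 0 \<le> p j) \<and> (\<forall>j. n \<le> j \<longrightarrow> p j = 0) \<and> (\<Sum>j<n. p j) = R"

definition envy_free_assignment ::
  "(nat \<Rightarrow> (nat \<Rightarrow> real) \<Rightarrow> nat set) \<Rightarrow> (nat \<Rightarrow> real) \<Rightarrow> nat set \<Rightarrow> nat \<Rightarrow> (nat \<Rightarrow> nat) \<Rightarrow> bool" where
  "envy_free_assignment pref p M n \<sigma> \<longleftrightarrow>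
     bij_betw \<sigma> M {..<n} \<and> (\<forall>i\<in>M. \<sigma> i \<in> pref i p)"

end

theory Submission
  imports Defs
begin

text \<open>With \<open>n + 1\<close> roommates and \<open>n\<close> rooms, it suffices to find a rent division together with a
  fractional assignment supported on preferred rooms in which every roommate gets one room in
  total and every room is shared out exactly \<open>(n + 1) / n\<close> times. Indeed, if one roommate leaves,
  any set \<open>T\<close> of the others is spread over the set \<open>N\<close> of rooms some of them prefer, so
  \<open>|T| \<le> |N| (n + 1) / n\<close>; as \<open>|T| \<le> n\<close> this gives \<open>|T| \<le> |N|\<close>, and Hall's theorem yields the
  envy-free assignment.

  Such a fractional assignment is obtained as a limit of market equilibria. For \<open>e > 0\<close> each
  roommate spreads her unit continuously over the rooms she prefers up to distance \<open>e\<close>; Brouwer's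
  theorem (derived from Kuhn's lemma) applied to a price-adjustment map gives rent divisions at
  which every room is demanded exactly \<open>(n + 1) / n\<close> times, free rooms never being
  under-demanded. Letting \<open>e \<rightarrow> 0\<close> along a convergent subsequence, closedness of the preferences
  turns "preferred up to distance \<open>e\<close>" into "preferred".\<close>

lemma finite_bounded_convergent_subseq:
  fixes X :: "nat \<Rightarrow> 'a \<Rightarrow> real"
  assumes "finite K" and "\<And>m a. a \<in> K \<Longrightarrow> \<bar>X m a\<bar> \<le> B"
  obtains \<phi> L where "strict_mono \<phi>" "\<And>a. a \<in> K \<Longrightarrow> (\<lambda>m. X (\<phi> m) a) \<longlonglongrightarrow> L a"
proof -
  have "\<exists>\<phi> L. strict_mono \<phi> \<and> (\<forall>a\<in>K. (\<lambda>m. X (\<phi> m) a) \<longlonglongrightarrow> L a)"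
    using assms
  proof (induction K rule: finite_induct)
    case empty
    show ?case using strict_mono_id by blast
  next
    case (insert a K)
    then obtain \<phi> L where \<phi>: "strict_mono \<phi>" and L: "\<forall>b\<in>K. (\<lambda>m. X (\<phi> m) b) \<longlonglongrightarrow> L b"
      by auto
    have "\<forall>m. X (\<phi> m) a \<in> {-B..B}"
      using insert.prems[of a] by (auto simp: abs_le_iff minus_le_iff)
    from seq_compactE[OF compact_imp_seq_compact[OF compact_Icc] this]
    obtain l \<psi> where \<psi>: "strict_mono \<psi>" and l: "((\<lambda>m. X (\<phi> m) a) \<circ> \<psi>) \<longlonglongrightarrow> l" .
    have "(\<lambda>m. X ((\<phi> \<circ> \<psi>) m) b) \<longlonglongrightarrow> (L(a := l)) b" if "b \<in> insert a K" for b
      using that l LIMSEQ_subseq_LIMSEQ[OF bspec[OF L] \<psi>] insert.hyps(2)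
      by (auto simp: o_def)
    then show ?case
      using strict_mono_o[OF \<phi> \<psi>] by blast
  qed
  then show thesis using that by blast
qed

lemma tendsto_close_sequence:
  fixes X Y e :: "nat \<Rightarrow> real"
  assumes "X \<longlonglongrightarrow> x" and "\<And>m. \<bar>Y m - X m\<bar> \<le> e m" and "e \<longlonglongrightarrow> 0"
  shows "Y \<longlonglongrightarrow> x"
proof -
  have "(\<lambda>m. Y m - X m) \<longlonglongrightarrow> 0"
    by (rule Lim_null_comparison[OF _ assms(3)]) (simp add: assms(2))
  from tendsto_add[OF this assms(1)] show ?thesis by simp
qed

definition unit_cube :: "nat \<Rightarrow> (nat \<Rightarrow> real) set" where
  "unit_cube n = {x. (\<forall>i<n. 0 \<le> x i \<and> x i \<le> 1) \<and> (\<forall>i. n \<le> i \<longrightarrow> x i = 0)}"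

definition unit_simplex :: "nat \<Rightarrow> (nat \<Rightarrow> real) set" where
  "unit_simplex n = {p. rent_division n 1 p}"

lemma unit_simplex_le_1:
  assumes "p \<in> unit_simplex n" "i < n"
  shows "p i \<le> 1"
proof -
  have "p i \<le> (\<Sum>j<n. p j)"
    by (rule member_le_sum) (use assms in \<open>auto simp: unit_simplex_def rent_division_def\<close>)
  then show ?thesis using assms by (simp add: unit_simplex_def rent_division_def)
qed

lemma unit_simplex_subset_unit_cube: "unit_simplex n \<subseteq> unit_cube n"
  using unit_simplex_le_1 by (fastforce simp: unit_simplex_def rent_division_def unit_cube_def)

lemma unit_cube_LIMSEQ:
  assumes "\<And>m. xs m \<in> unit_cube n" and "\<And>l. (\<lambda>m. xs m l) \<longlonglongrightarrow> x l"
  shows "x \<in> unit_cube n"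
proof -
  have "0 \<le> x l \<and> x l \<le> 1" if "l < n" for l
    using assms that LIMSEQ_le_const[OF assms(2)] LIMSEQ_le_const2[OF assms(2)]
    by (auto simp: unit_cube_def)
  moreover have "x l = 0" if "n \<le> l" for l
    using assms(1) that LIMSEQ_unique[OF assms(2)[of l]] by (simp add: unit_cube_def)
  ultimately show ?thesis by (simp add: unit_cube_def)
qed

lemma unit_simplex_LIMSEQ:
  assumes "\<And>m. ps m \<in> unit_simplex n" and "\<And>l. (\<lambda>m. ps m l) \<longlonglongrightarrow> p l"
  shows "p \<in> unit_simplex n"
proof -
  have cube: "p \<in> unit_cube n"
    by (rule unit_cube_LIMSEQ[of ps]) (use assms unit_simplex_subset_unit_cube in auto)
  have "(\<lambda>m. \<Sum>l<n. ps m l) \<longlonglongrightarrow> (\<Sum>l<n. p l)"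
    by (intro tendsto_sum assms(2))
  moreover have "(\<lambda>m. \<Sum>l<n. ps m l) = (\<lambda>m. 1)"
    using assms(1) by (simp add: unit_simplex_def rent_division_def)
  ultimately have "(\<Sum>l<n. p l) = 1"
    by (simp add: LIMSEQ_const_iff)
  with cube show ?thesis
    by (simp add: unit_simplex_def rent_division_def unit_cube_def)
qed

lemma unit_cube_seq_compact:
  fixes xs :: "nat \<Rightarrow> nat \<Rightarrow> real"
  assumes "\<And>m. xs m \<in> unit_cube n"
  obtains \<phi> x where "strict_mono \<phi>" "x \<in> unit_cube n" "\<And>l. (\<lambda>m. xs (\<phi> m) l) \<longlonglongrightarrow> x l"
proof -
  have "\<bar>xs m l\<bar> \<le> 1" if "l \<in> {..<n}" for m l
    using assms[of m] that by (simp add: unit_cube_def)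
  then obtain \<phi> L where \<phi>: "strict_mono \<phi>" and L: "\<And>l. l \<in> {..<n} \<Longrightarrow> (\<lambda>m. xs (\<phi> m) l) \<longlonglongrightarrow> L l"
    using finite_bounded_convergent_subseq[of "{..<n}" xs 1] by blast
  define x where "x l = (if l < n then L l else 0)" for l
  have lim: "(\<lambda>m. xs (\<phi> m) l) \<longlonglongrightarrow> x l" for l
    using L[of l] assms by (cases "l < n") (simp_all add: x_def unit_cube_def)
  show thesis
    using that[OF \<phi> unit_cube_LIMSEQ[OF assms lim] lim] .
qed

lemma unit_simplex_seq_compact:
  fixes ps :: "nat \<Rightarrow> nat \<Rightarrow> real"
  assumes "\<And>m. ps m \<in> unit_simplex n"
  obtains \<phi> p where "strict_mono \<phi>" "p \<in> unit_simplex n" "\<And>l. (\<lambda>m. ps (\<phi> m) l) \<longlonglongrightarrow> p l"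
proof -
  have "ps m \<in> unit_cube n" for m
    using assms unit_simplex_subset_unit_cube by blast
  then obtain \<phi> p where \<phi>: "strict_mono \<phi>" and lim: "\<And>l. (\<lambda>m. ps (\<phi> m) l) \<longlonglongrightarrow> p l"
    using unit_cube_seq_compact[of ps n] by metis
  show thesis
    by (rule that[OF \<phi> unit_simplex_LIMSEQ[OF assms lim] lim])
qed

section \<open>Brouwer's fixed point theorem for cube and simplex\<close>

definition lattice_point :: "nat \<Rightarrow> nat \<Rightarrow> (nat \<Rightarrow> nat) \<Rightarrow> nat \<Rightarrow> real" where
  "lattice_point n d v = (\<lambda>l. if l < n then real (v l) / real d else 0)"

lemma lattice_point_in_unit_cube:
  "0 < d \<Longrightarrow> (\<And>j. j < n \<Longrightarrow> v j \<le> d) \<Longrightarrow> lattice_point n d v \<in> unit_cube n"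
  by (auto simp: unit_cube_def lattice_point_def divide_le_eq_1)

lemma lattice_point_near:
  assumes d: "0 < d" and v: "\<forall>j<n. q j \<le> v j \<and> v j \<le> q j + 1"
  shows "\<bar>lattice_point n d v l - lattice_point n d q l\<bar> \<le> 1 / real d"
proof (cases "l < n")
  case True
  then have "\<bar>real (v l) - real (q l)\<bar> \<le> 1"
    using v by auto
  then have "\<bar>real (v l) - real (q l)\<bar> / real d \<le> 1 / real d"
    using d by (intro divide_right_mono) auto
  then show ?thesis
    using True by (simp add: lattice_point_def abs_divide diff_divide_distrib[symmetric])
qed (simp add: lattice_point_def)

definition approx_fixpoint :: "((nat \<Rightarrow> real) \<Rightarrow> nat \<Rightarrow> real) \<Rightarrow> nat \<Rightarrow> real \<Rightarrow> (nat \<Rightarrow> real) \<Rightarrow> bool" where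
  "approx_fixpoint G n e x \<longleftrightarrow> x \<in> unit_cube n \<and>
     (\<forall>i<n. \<exists>y\<in>unit_cube n. \<exists>z\<in>unit_cube n.
        (\<forall>l. \<bar>y l - x l\<bar> \<le> e) \<and> (\<forall>l. \<bar>z l - x l\<bar> \<le> e) \<and> y i \<le> G y i \<and> G z i \<le> z i)"

text \<open>Coordinate \<open>i\<close> of a lattice point is labelled \<open>0\<close> where \<open>G\<close> does not decrease it; Kuhn's
  lemma yields a lattice cell on which every coordinate carries both labels.\<close>
lemma unit_cube_approx_fixpoint:
  fixes G :: "(nat \<Rightarrow> real) \<Rightarrow> nat \<Rightarrow> real" and d :: nat
  assumes maps: "\<And>x. x \<in> unit_cube n \<Longrightarrow> G x \<in> unit_cube n" and d: "0 < d"
  shows "\<exists>x. approx_fixpoint G n (1 / real d) x"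
proof -
  let ?x = "lattice_point n d"
  define label where "label v i = (if ?x v i = 0 \<or> ?x v i < G (?x v) i then 0 else 1::nat)" for v i
  have binary: "\<forall>v. (\<forall>i<n. v i \<le> d) \<longrightarrow> (\<forall>i<n. label v i = 0 \<or> label v i = 1)"
    by (simp add: label_def)
  have zero: "\<forall>v. (\<forall>i<n. v i \<le> d) \<longrightarrow> (\<forall>i<n. v i = 0 \<longrightarrow> label v i = 0)"
    by (simp add: label_def lattice_point_def)
  have one: "\<forall>v. (\<forall>i<n. v i \<le> d) \<longrightarrow> (\<forall>i<n. v i = d \<longrightarrow> label v i = 1)"
  proof (intro allI impI)
    fix v i assume v: "\<forall>i<n. v i \<le> d" and i: "i < n" and "v i = d"
    then have "?x v i = 1" using d by (simp add: lattice_point_def)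
    moreover have "G (?x v) i \<le> 1"
      using maps[OF lattice_point_in_unit_cube[OF d]] v i by (simp add: unit_cube_def)
    ultimately show "label v i = 1" by (simp add: label_def)
  qed
  obtain q where q: "\<forall>i<n. q i < d"
    and cell: "\<forall>i<n. \<exists>r s. (\<forall>j<n. q j \<le> r j \<and> r j \<le> q j + 1) \<and>
                   (\<forall>j<n. q j \<le> s j \<and> s j \<le> q j + 1) \<and> label r i \<noteq> label s i"
    using kuhn_lemma[OF d binary zero one] by blast
  have near: "?x v \<in> unit_cube n \<and> (\<forall>l. \<bar>?x v l - ?x q l\<bar> \<le> 1 / real d)"
    if v: "\<forall>j<n. q j \<le> v j \<and> v j \<le> q j + 1" for v
    using lattice_point_near[OF d v] lattice_point_in_unit_cube[OF d] v q
    by (metis Suc_eq_plus1 Suc_leI le_trans)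
  have up: "?x v i \<le> G (?x v) i" if "?x v \<in> unit_cube n" "i < n" "label v i = 0" for v i
    using that maps[OF that(1)] by (auto simp: label_def unit_cube_def split: if_splits)
  have down: "G (?x v) i \<le> ?x v i" if "label v i \<noteq> 0" for v i
    using that by (auto simp: label_def split: if_splits)
  show ?thesis
    unfolding approx_fixpoint_def
  proof (intro exI[of _ "?x q"] conjI allI impI)
    show "?x q \<in> unit_cube n"
      using q by (intro lattice_point_in_unit_cube[OF d]) (auto simp: less_imp_le)
  next
    fix i assume i: "i < n"
    obtain r s where r: "\<forall>j<n. q j \<le> r j \<and> r j \<le> q j + 1" and s: "\<forall>j<n. q j \<le> s j \<and> s j \<le> q j + 1"
      and differ: "label r i \<noteq> label s i"
      using cell i by blast
    show "\<exists>y\<in>unit_cube n. \<exists>z\<in>unit_cube n. (\<forall>l. \<bar>y l - ?x q l\<bar> \<le> 1 / real d) \<and>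
            (\<forall>l. \<bar>z l - ?x q l\<bar> \<le> 1 / real d) \<and> y i \<le> G y i \<and> G z i \<le> z i"
    proof (cases "label r i = 0")
      case True
      then have "label s i \<noteq> 0" using differ by simp
      then show ?thesis using near[OF r] near[OF s] up[OF _ i True] down[of s i] by blast
    next
      case False
      then have "label s i = 0" using differ by (auto simp: label_def split: if_splits)
      then show ?thesis using near[OF r] near[OF s] up[of s, OF _ i] down[OF False] by blast
    qed
  qed
qed

lemma brouwer_unit_cube:
  fixes G :: "(nat \<Rightarrow> real) \<Rightarrow> nat \<Rightarrow> real"
  assumes maps: "\<And>x. x \<in> unit_cube n \<Longrightarrow> G x \<in> unit_cube n"
    and cont: "\<And>xs x l. (\<And>m. xs m \<in> unit_cube n) \<Longrightarrow> x \<in> unit_cube n \<Longrightarrow>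
                 (\<And>l. (\<lambda>m. xs m l) \<longlonglongrightarrow> x l) \<Longrightarrow> (\<lambda>m. G (xs m) l) \<longlonglongrightarrow> G x l"
  obtains x where "x \<in> unit_cube n" "G x = x"
proof -
  obtain X where "\<And>m. approx_fixpoint G n (1 / real (Suc m)) (X m)"
    using unit_cube_approx_fixpoint[where G = G and n = n, OF maps zero_less_Suc] by metis
  then have X: "\<And>m. X m \<in> unit_cube n"
    and approx: "\<And>m i. i < n \<Longrightarrow> \<exists>y\<in>unit_cube n. \<exists>z\<in>unit_cube n.
           (\<forall>l. \<bar>y l - X m l\<bar> \<le> 1 / real (Suc m)) \<and> (\<forall>l. \<bar>z l - X m l\<bar> \<le> 1 / real (Suc m)) \<and>
           y i \<le> G y i \<and> G z i \<le> z i"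
    unfolding approx_fixpoint_def by blast+
  have "\<forall>m i. \<exists>y. i < n \<longrightarrow> y \<in> unit_cube n \<and> (\<forall>l. \<bar>y l - X m l\<bar> \<le> 1 / real (Suc m)) \<and> y i \<le> G y i"
    using approx by blast
  then obtain Y where Y: "\<And>m i. i < n \<Longrightarrow> Y m i \<in> unit_cube n \<and>
           (\<forall>l. \<bar>Y m i l - X m l\<bar> \<le> 1 / real (Suc m)) \<and> Y m i i \<le> G (Y m i) i"
    by metis
  have "\<forall>m i. \<exists>z. i < n \<longrightarrow> z \<in> unit_cube n \<and> (\<forall>l. \<bar>z l - X m l\<bar> \<le> 1 / real (Suc m)) \<and> G z i \<le> z i"
    using approx by blast
  then obtain Z where Z: "\<And>m i. i < n \<Longrightarrow> Z m i \<in> unit_cube n \<and>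
           (\<forall>l. \<bar>Z m i l - X m l\<bar> \<le> 1 / real (Suc m)) \<and> G (Z m i) i \<le> Z m i i"
    by metis
  obtain \<phi> x where \<phi>: "strict_mono \<phi>" and x: "x \<in> unit_cube n"
    and lim: "\<And>l. (\<lambda>m. X (\<phi> m) l) \<longlonglongrightarrow> x l"
    using unit_cube_seq_compact[of X n] X by metis
  have mesh: "(\<lambda>m. 1 / real (Suc (\<phi> m))) \<longlonglongrightarrow> 0"
    using LIMSEQ_subseq_LIMSEQ[OF LIMSEQ_Suc[OF lim_1_over_n] \<phi>] by (simp add: o_def)
  have "G x i = x i" if i: "i < n" for i
  proof -
    have Ylim: "(\<lambda>m. Y (\<phi> m) i l) \<longlonglongrightarrow> x l" and Zlim: "(\<lambda>m. Z (\<phi> m) i l) \<longlonglongrightarrow> x l" for l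
      using Y[OF i] Z[OF i] by (auto intro: tendsto_close_sequence[OF lim _ mesh])
    have "x i \<le> G x i"
      by (rule LIMSEQ_le[OF Ylim cont[OF _ x Ylim]]) (use Y[OF i] in auto)
    moreover have "G x i \<le> x i"
      by (rule LIMSEQ_le[OF cont[OF _ x Zlim] Zlim]) (use Z[OF i] in auto)
    ultimately show ?thesis by simp
  qed
  moreover have "G x i = x i" if "n \<le> i" for i
    using maps[OF x] x that by (simp add: unit_cube_def)
  ultimately have "G x = x" by (meson ext not_le)
  with x that show thesis by blast
qed

text \<open>Add the deficit \<open>1 - \<Sum>y\<close>, if positive, to every coordinate and renormalise.\<close>
definition simplex_retraction :: "nat \<Rightarrow> (nat \<Rightarrow> real) \<Rightarrow> nat \<Rightarrow> real" where
  "simplex_retraction n y = (\<lambda>l. if l < n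
     then (y l + max 0 (1 - (\<Sum>j<n. y j))) / ((\<Sum>j<n. y j) + real n * max 0 (1 - (\<Sum>j<n. y j)))
     else 0)"

lemma simplex_retraction_denominator_ge_1:
  assumes "1 \<le> n"
  shows "1 \<le> (s::real) + real n * max 0 (1 - s)"
proof (cases "1 \<le> s")
  case False
  have "1 * (1 - s) \<le> real n * (1 - s)"
    using assms False by (intro mult_right_mono) auto
  then show ?thesis using False by (simp add: algebra_simps)
qed simp

lemma simplex_retraction_in_unit_simplex:
  assumes n: "1 \<le> n" and y: "y \<in> unit_cube n"
  shows "simplex_retraction n y \<in> unit_simplex n"
proof -
  define s where "s = (\<Sum>j<n. y j)"
  define a where "a = max 0 (1 - s)"
  have den: "1 \<le> s + real n * a"
    unfolding a_def by (rule simplex_retraction_denominator_ge_1[OF n])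
  have "(\<Sum>i<n. simplex_retraction n y i) = (\<Sum>i<n. y i + a) / (s + real n * a)"
    by (simp add: simplex_retraction_def s_def a_def sum_divide_distrib)
  also have "\<dots> = 1"
    using den by (simp add: sum.distrib s_def)
  finally show ?thesis
    using y den by (auto simp: unit_simplex_def rent_division_def simplex_retraction_def
        unit_cube_def s_def a_def)
qed

lemma simplex_retraction_id: "p \<in> unit_simplex n \<Longrightarrow> simplex_retraction n p = p"
  by (auto simp: simplex_retraction_def unit_simplex_def rent_division_def)

lemma simplex_retraction_tendsto:
  assumes n: "1 \<le> n" and lim: "\<And>l. (\<lambda>m. ys m l) \<longlonglongrightarrow> y l"
  shows "(\<lambda>m. simplex_retraction n (ys m) l) \<longlonglongrightarrow> simplex_retraction n y l"
proof (cases "l < n")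
  case True
  have "(\<Sum>j<n. y j) + real n * max 0 (1 - (\<Sum>j<n. y j)) \<noteq> 0"
    using simplex_retraction_denominator_ge_1[OF n, of "\<Sum>j<n. y j"] by linarith
  then show ?thesis
    using True unfolding simplex_retraction_def
    by (simp, intro tendsto_divide tendsto_add tendsto_mult tendsto_max tendsto_diff
        tendsto_sum lim tendsto_const)
qed (simp add: simplex_retraction_def)

lemma brouwer_unit_simplex:
  fixes F :: "(nat \<Rightarrow> real) \<Rightarrow> nat \<Rightarrow> real"
  assumes n: "1 \<le> n"
    and maps: "\<And>p. p \<in> unit_simplex n \<Longrightarrow> F p \<in> unit_simplex n"
    and cont: "\<And>ps p l. (\<And>m. ps m \<in> unit_simplex n) \<Longrightarrow> p \<in> unit_simplex n \<Longrightarrow>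
                 (\<And>l. (\<lambda>m. ps m l) \<longlonglongrightarrow> p l) \<Longrightarrow> (\<lambda>m. F (ps m) l) \<longlonglongrightarrow> F p l"
  obtains p where "p \<in> unit_simplex n" "F p = p"
proof -
  let ?G = "\<lambda>y. F (simplex_retraction n y)"
  have G_maps: "?G y \<in> unit_simplex n" if "y \<in> unit_cube n" for y
    using maps simplex_retraction_in_unit_simplex[OF n that] by blast
  obtain y where y: "y \<in> unit_cube n" "?G y = y"
  proof (rule brouwer_unit_cube)
    show "?G y \<in> unit_cube n" if "y \<in> unit_cube n" for y
      using G_maps[OF that] unit_simplex_subset_unit_cube by blast
    show "(\<lambda>m. ?G (ys m) l) \<longlonglongrightarrow> ?G y l"
      if "\<And>m. ys m \<in> unit_cube n" "y \<in> unit_cube n" "\<And>l. (\<lambda>m. ys m l) \<longlonglongrightarrow> y l" for ys y l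
      using that simplex_retraction_in_unit_simplex[OF n] simplex_retraction_tendsto[OF n]
      by (intro cont) auto
  qed
  then have "y \<in> unit_simplex n"
    using G_maps by metis
  then show thesis
    using that y simplex_retraction_id by metis
qed

section \<open>Existence of an excess demand equilibrium\<close>

definition price_adjustment ::
    "nat \<Rightarrow> ((nat \<Rightarrow> real) \<Rightarrow> nat \<Rightarrow> real) \<Rightarrow> (nat \<Rightarrow> real) \<Rightarrow> nat \<Rightarrow> real" where
  "price_adjustment n z p = (\<lambda>l. if l < n
     then (p l + max 0 (z p l)) / (1 + (\<Sum>j<n. max 0 (z p j))) else 0)"

lemma price_adjustment_in_unit_simplex:
  assumes p: "p \<in> unit_simplex n"
  shows "price_adjustment n z p \<in> unit_simplex n"
proof -
  define S where "S = (\<Sum>j<n. max 0 (z p j))"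
  have S: "0 \<le> S" unfolding S_def by (rule sum_nonneg) simp
  have "(\<Sum>i<n. price_adjustment n z p i) = (\<Sum>i<n. p i + max 0 (z p i)) / (1 + S)"
    by (simp add: price_adjustment_def S_def sum_divide_distrib)
  also have "\<dots> = 1"
    using p S by (simp add: sum.distrib S_def unit_simplex_def rent_division_def)
  finally show ?thesis
    using p S by (auto simp: unit_simplex_def rent_division_def price_adjustment_def S_def)
qed

lemma price_adjustment_tendsto:
  assumes lim: "\<And>l. (\<lambda>m. ps m l) \<longlonglongrightarrow> p l"
    and z: "\<And>j. j < n \<Longrightarrow> (\<lambda>m. z (ps m) j) \<longlonglongrightarrow> z p j"
  shows "(\<lambda>m. price_adjustment n z (ps m) l) \<longlonglongrightarrow> price_adjustment n z p l"
proof (cases "l < n")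
  case True
  have "1 + (\<Sum>j<n. max 0 (z p j)) \<noteq> 0"
    using sum_nonneg[of "{..<n}" "\<lambda>j. max 0 (z p j)"] by simp
  then show ?thesis
    using True unfolding price_adjustment_def
    by (simp, intro tendsto_divide tendsto_add tendsto_max tendsto_sum tendsto_const lim z) auto
qed (simp add: price_adjustment_def)

text \<open>At a fixed point every price is proportional to the positive part of its excess demand. If
  some excess demand were positive, all would be nonnegative (at free rooms by the boundary
  condition), hence zero by Walras' law; so all are nonpositive, hence zero.\<close>
lemma price_adjustment_fixpoint:
  assumes p: "p \<in> unit_simplex n" and fixed: "price_adjustment n z p = p"
    and walras: "(\<Sum>j<n. z p j) = 0"
    and boundary: "\<And>j. j < n \<Longrightarrow> p j = 0 \<Longrightarrow> 0 \<le> z p j"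
    and j: "j < n"
  shows "z p j = 0"
proof -
  define S where "S = (\<Sum>j<n. max 0 (z p j))"
  have S: "0 \<le> S" unfolding S_def by (rule sum_nonneg) simp
  have scaled: "p j * S = max 0 (z p j)" if "j < n" for j
  proof -
    have "p j * (1 + S) = p j + max 0 (z p j)"
      using fun_cong[OF fixed, of j] that S by (simp add: price_adjustment_def S_def field_simps)
    then show ?thesis by (simp add: algebra_simps)
  qed
  have "S = 0"
  proof (rule ccontr)
    assume "S \<noteq> 0"
    with S have "0 < S" by simp
    have "0 \<le> z p j" if "j < n" for j
    proof (cases "p j = 0")
      case False
      then have "0 < p j * S"
        using p that \<open>0 < S\<close> by (auto simp: unit_simplex_def rent_division_def order_less_le)
      then show ?thesis using scaled[OF that] by simp
    qed (use boundary that in auto)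
    then have "\<forall>j\<in>{..<n}. z p j = 0"
      using sum_nonneg_eq_0_iff[of "{..<n}" "z p"] walras by auto
    then have "S = 0" by (simp add: S_def)
    with \<open>0 < S\<close> show False by simp
  qed
  then have "\<forall>j\<in>{..<n}. max 0 (z p j) = 0"
    using sum_nonneg_eq_0_iff[of "{..<n}" "\<lambda>j. max 0 (z p j)"] by (simp add: S_def)
  then have "\<forall>j\<in>{..<n}. 0 \<le> - z p j"
    by (metis lessThan_iff max.cobounded2 neg_0_le_iff_le)
  then have "\<forall>j\<in>{..<n}. - z p j = 0"
    using sum_nonneg_eq_0_iff[of "{..<n}" "\<lambda>j. - z p j"] walras by (simp add: sum_negf)
  then show ?thesis using j by simp
qed

lemma excess_demand_equilibrium:
  fixes z :: "(nat \<Rightarrow> real) \<Rightarrow> nat \<Rightarrow> real"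
  assumes n: "1 \<le> n"
    and walras: "\<And>p. p \<in> unit_simplex n \<Longrightarrow> (\<Sum>j<n. z p j) = 0"
    and boundary: "\<And>p j. p \<in> unit_simplex n \<Longrightarrow> j < n \<Longrightarrow> p j = 0 \<Longrightarrow> 0 \<le> z p j"
    and cont: "\<And>ps p j. (\<And>m. ps m \<in> unit_simplex n) \<Longrightarrow> p \<in> unit_simplex n \<Longrightarrow>
                 (\<And>l. (\<lambda>m. ps m l) \<longlonglongrightarrow> p l) \<Longrightarrow> j < n \<Longrightarrow> (\<lambda>m. z (ps m) j) \<longlonglongrightarrow> z p j"
  obtains p where "p \<in> unit_simplex n" "\<And>j. j < n \<Longrightarrow> z p j = 0"
proof -
  obtain p where p: "p \<in> unit_simplex n" "price_adjustment n z p = p"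
  proof (rule brouwer_unit_simplex[OF n price_adjustment_in_unit_simplex])
    show "(\<lambda>m. price_adjustment n z (ps m) l) \<longlonglongrightarrow> price_adjustment n z p l"
      if "\<And>m. ps m \<in> unit_simplex n" "p \<in> unit_simplex n" "\<And>l. (\<lambda>m. ps m l) \<longlonglongrightarrow> p l"
      for ps p l
      using that by (intro price_adjustment_tendsto cont)
  qed
  show thesis
    using that p price_adjustment_fixpoint[OF p walras[OF p(1)] boundary[OF p(1)]] by blast
qed

definition l1_dist :: "nat \<Rightarrow> (nat \<Rightarrow> real) \<Rightarrow> (nat \<Rightarrow> real) \<Rightarrow> real" where
  "l1_dist n p q = (\<Sum>l<n. \<bar>p l - q l\<bar>)"

text \<open>The distance to a set is truncated at 1 so that the infimum ranges over a nonempty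
  bounded set even when the set is empty.\<close>
definition l1_setdist :: "nat \<Rightarrow> (nat \<Rightarrow> real) set \<Rightarrow> (nat \<Rightarrow> real) \<Rightarrow> real" where
  "l1_setdist n C p = Inf (insert 1 (l1_dist n p ` C))"

lemma l1_dist_nonneg: "0 \<le> l1_dist n p q"
  by (simp add: l1_dist_def sum_nonneg)

lemma l1_dist_triangle: "l1_dist n p r \<le> l1_dist n p q + l1_dist n q r"
  unfolding l1_dist_def sum.distrib[symmetric] by (rule sum_mono) linarith

lemma l1_dist_commute: "l1_dist n p q = l1_dist n q p"
  by (simp add: l1_dist_def abs_minus_commute)

lemma abs_le_l1_dist: "l < n \<Longrightarrow> \<bar>p l - q l\<bar> \<le> l1_dist n p q"
  unfolding l1_dist_def by (rule member_le_sum) auto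

lemma l1_dist_tendsto_0:
  assumes "\<And>l. (\<lambda>m. ps m l) \<longlonglongrightarrow> p l"
  shows "(\<lambda>m. l1_dist n (ps m) p) \<longlonglongrightarrow> 0"
proof -
  have "(\<lambda>m. \<Sum>l<n. \<bar>ps m l - p l\<bar>) \<longlonglongrightarrow> (\<Sum>l<n. \<bar>p l - p l\<bar>)"
    by (intro tendsto_sum tendsto_rabs tendsto_diff assms tendsto_const)
  then show ?thesis by (simp add: l1_dist_def)
qed

lemma bdd_below_l1_setdist: "bdd_below (insert 1 (l1_dist n p ` C))"
  by (rule bdd_belowI[of _ 0]) (auto simp: l1_dist_nonneg)

lemma l1_setdist_nonneg: "0 \<le> l1_setdist n C p"
  unfolding l1_setdist_def by (rule cInf_greatest) (auto simp: l1_dist_nonneg)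

lemma l1_setdist_le_1: "l1_setdist n C p \<le> 1"
  unfolding l1_setdist_def by (rule cInf_lower[OF _ bdd_below_l1_setdist]) simp

lemma l1_setdist_le: "q \<in> C \<Longrightarrow> l1_setdist n C p \<le> l1_dist n p q"
  unfolding l1_setdist_def by (rule cInf_lower[OF _ bdd_below_l1_setdist]) simp

lemma l1_setdist_eq_0: "p \<in> C \<Longrightarrow> l1_setdist n C p = 0"
  using l1_setdist_le[of p C n p] l1_setdist_nonneg[of n C p] by (simp add: l1_dist_def)

lemma l1_setdist_lipschitz: "l1_setdist n C p \<le> l1_setdist n C q + l1_dist n p q"
proof -
  have "l1_setdist n C p - l1_dist n p q \<le> l1_setdist n C q"
    unfolding l1_setdist_def[of n C q]
  proof (rule cInf_greatest)
    fix x assume "x \<in> insert 1 (l1_dist n q ` C)"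
    then show "l1_setdist n C p - l1_dist n p q \<le> x"
    proof
      assume "x = 1"
      then show ?thesis using l1_setdist_le_1[of n C p] l1_dist_nonneg[of n p q] by simp
    next
      assume "x \<in> l1_dist n q ` C"
      then obtain r where "r \<in> C" "x = l1_dist n q r" by blast
      then show ?thesis
        using l1_setdist_le[of r C n p] l1_dist_triangle[of n p r q] by simp
    qed
  qed simp
  then show ?thesis by simp
qed

lemma l1_setdist_less:
  assumes "l1_setdist n C p < e" and "e \<le> 1"
  obtains q where "q \<in> C" "l1_dist n p q < e"
proof -
  have "\<exists>x\<in>insert 1 (l1_dist n p ` C). x < e"
    using assms(1) unfolding l1_setdist_def by (subst (asm) cInf_less_iff[OF _ bdd_below_l1_setdist]) auto
  then show thesis using assms(2) that by auto
qed

lemma l1_setdist_tendsto: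
  assumes "\<And>l. (\<lambda>m. ps m l) \<longlonglongrightarrow> p l"
  shows "(\<lambda>m. l1_setdist n C (ps m)) \<longlonglongrightarrow> l1_setdist n C p"
proof -
  have "\<bar>l1_setdist n C (ps m) - l1_setdist n C p\<bar> \<le> l1_dist n (ps m) p" for m
    using l1_setdist_lipschitz[of n C "ps m" p] l1_setdist_lipschitz[of n C p "ps m"]
    by (simp add: l1_dist_commute abs_le_iff)
  then show ?thesis
    by (intro tendsto_close_sequence[OF tendsto_const _ l1_dist_tendsto_0[OF assms]])
qed

lemma l1_setdist_eq_0_imp_mem:
  assumes C: "C \<subseteq> unit_simplex n"
    and closed: "\<And>qs. (\<And>m. qs m \<in> C) \<Longrightarrow> (\<And>l. (\<lambda>m. qs m l) \<longlonglongrightarrow> p l) \<Longrightarrow> p \<in> C"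
    and p: "p \<in> unit_simplex n" and dist: "l1_setdist n C p = 0"
  shows "p \<in> C"
proof -
  have "\<exists>q. q \<in> C \<and> l1_dist n p q < 1 / real (Suc m)" for m
    using l1_setdist_less[of n C p "1 / real (Suc m)"] dist by auto
  then obtain qs where qs: "\<And>m. qs m \<in> C" and close: "\<And>m. l1_dist n p (qs m) < 1 / real (Suc m)"
    by metis
  have "(\<lambda>m. qs m l) \<longlonglongrightarrow> p l" for l
  proof (cases "l < n")
    case True
    have "\<bar>qs m l - p l\<bar> \<le> 1 / real (Suc m)" for m
      using abs_le_l1_dist[OF True, of p "qs m"] close[of m] by (simp add: abs_minus_commute)
    then show ?thesis
      by (intro tendsto_close_sequence[OF tendsto_const _ LIMSEQ_Suc[OF lim_1_over_n]])
  next
    case False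
    then have "qs m l = p l" for m
      using qs[of m] C p by (auto simp: unit_simplex_def rent_division_def)
    then show ?thesis by simp
  qed
  then show ?thesis by (rule closed[OF qs])
qed

section \<open>Hall's marriage theorem\<close>

lemma distinct_representatives_glue:
  assumes "T \<subseteq> I" and f: "inj_on f T" "\<forall>i\<in>T. f i \<in> A i"
    and g: "inj_on g (I - T)" "\<forall>i\<in>I - T. g i \<in> A i - f ` T"
  shows "\<exists>h. inj_on h I \<and> (\<forall>i\<in>I. h i \<in> A i)"
proof (intro exI conjI)
  let ?h = "\<lambda>i. if i \<in> T then f i else g i"
  have "inj_on ?h T"
    using f(1) by (simp cong: inj_on_cong)
  moreover have "inj_on ?h (I - T)"
    using g(1) inj_on_cong[of "I - T" ?h g] by simp
  moreover have "?h ` T \<inter> ?h ` (I - T) = {}"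
    using g(2) by (force simp: image_iff)
  moreover have "T - (I - T) = T" "I - T - T = I - T" "T \<union> (I - T) = I"
    using assms(1) by auto
  ultimately show "inj_on ?h I"
    using inj_on_Un[of ?h T "I - T"] by simp
  show "\<forall>i\<in>I. ?h i \<in> A i"
    using f(2) g(2) by auto
qed

lemma hall_condition_remove_tight:
  assumes fin: "finite I" "\<And>i. i \<in> I \<Longrightarrow> finite (A i)"
    and hall: "\<And>T. T \<subseteq> I \<Longrightarrow> card T \<le> card (\<Union> (A ` T))"
    and T: "T \<subseteq> I" and tight: "card (\<Union> (A ` T)) = card T"
    and T': "T' \<subseteq> I - T"
  shows "card T' \<le> card (\<Union> ((\<lambda>i. A i - \<Union> (A ` T)) ` T'))"
proof -
  let ?N = "\<Union> (A ` T)"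
  have "finite T" "finite T'"
    using T T' fin(1) by (auto intro: finite_subset)
  moreover have "finite (\<Union> (A ` T'))"
    using \<open>finite T'\<close> T' fin(2) by auto
  ultimately have finite: "finite T" "finite T'" "finite ?N" "finite (\<Union> ((\<lambda>i. A i - ?N) ` T'))"
    using T fin(2) by (auto intro: finite_subset)
  have "card T + card T' = card (T \<union> T')"
    using T' finite by (auto intro: card_Un_disjoint[symmetric])
  also have "\<dots> \<le> card (\<Union> (A ` (T \<union> T')))"
    using T T' by (intro hall) auto
  also have "\<Union> (A ` (T \<union> T')) = ?N \<union> \<Union> ((\<lambda>i. A i - ?N) ` T')"
    by blast
  also have "card \<dots> = card ?N + card (\<Union> ((\<lambda>i. A i - ?N) ` T'))"
    using finite by (intro card_Un_disjoint) auto
  finally show ?thesis using tight by simp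
qed

lemma hall_condition_remove_slack:
  assumes fin: "finite I" "\<And>i. i \<in> I \<Longrightarrow> finite (A i)"
    and slack: "\<And>T. T \<noteq> {} \<Longrightarrow> T \<subset> I \<Longrightarrow> card T < card (\<Union> (A ` T))"
    and i: "i \<in> I" and T': "T' \<subseteq> I - {i}"
  shows "card T' \<le> card (\<Union> ((\<lambda>j. A j - {a}) ` T'))"
proof (cases "T' = {}")
  case False
  have "finite T'"
    using T' fin(1) by (auto intro: finite_subset)
  then have "finite (\<Union> (A ` T'))"
    using T' fin(2) by auto
  moreover have "card T' < card (\<Union> (A ` T'))"
    using T' i False by (intro slack) auto
  moreover have "\<Union> ((\<lambda>j. A j - {a}) ` T') = \<Union> (A ` T') - {a}"
    by blast
  ultimately show ?thesis
    using diff_card_le_card_Diff[of "{a}" "\<Union> (A ` T')"] by simp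
qed simp

text \<open>Halmos and Vaughan's induction: split off a proper subset that is matched tightly, or,
  if there is none, match any one element arbitrarily.\<close>
theorem hall_marriage:
  fixes A :: "'a \<Rightarrow> 'b set"
  assumes "finite I" and "\<And>i. i \<in> I \<Longrightarrow> finite (A i)"
    and "\<And>T. T \<subseteq> I \<Longrightarrow> card T \<le> card (\<Union> (A ` T))"
  shows "\<exists>f. inj_on f I \<and> (\<forall>i\<in>I. f i \<in> A i)"
  using assms
proof (induction "card I" arbitrary: I A rule: less_induct)
  case less
  note fin = less.prems(1,2) and hall = less.prems(3)
  show ?case
  proof (cases "\<exists>T. T \<noteq> {} \<and> T \<subset> I \<and> card (\<Union> (A ` T)) = card T")
    case True
    then obtain T where T: "T \<noteq> {}" "T \<subset> I" and tight: "card (\<Union> (A ` T)) = card T"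
      by blast
    have "finite T" using T fin(1) by (auto intro: finite_subset)
    have smaller: "card T < card I" "card (I - T) < card I"
    proof -
      show "card T < card I" using T(2) fin(1) by (rule psubset_card_mono[rotated])
      moreover have "0 < card T" using T(1) \<open>finite T\<close> by (simp add: card_gt_0_iff)
      ultimately show "card (I - T) < card I"
        using T(2) \<open>finite T\<close> by (simp add: card_Diff_subset psubset_imp_subset)
    qed
    have "\<exists>f. inj_on f T \<and> (\<forall>i\<in>T. f i \<in> A i)"
      by (rule less.hyps[OF smaller(1) \<open>finite T\<close>]) (use T fin hall in auto)
    then obtain f where f: "inj_on f T" "\<forall>i\<in>T. f i \<in> A i" by blast
    obtain g where g: "inj_on g (I - T)" "\<forall>i\<in>I - T. g i \<in> A i - \<Union> (A ` T)"
      using less.hyps[OF smaller(2), of "\<lambda>i. A i - \<Union> (A ` T)"] fin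
        hall_condition_remove_tight[OF fin hall psubset_imp_subset[OF T(2)] tight] by auto
    have "\<forall>i\<in>I - T. g i \<in> A i - f ` T"
      using f(2) g(2) by blast
    then show ?thesis
      using T(2) f g(1) by (intro distinct_representatives_glue[of T I f A g]) auto
  next
    case False
    have slack: "card T < card (\<Union> (A ` T))" if "T \<noteq> {}" "T \<subset> I" for T
    proof -
      have "card T \<le> card (\<Union> (A ` T))"
        using hall[OF psubset_imp_subset[OF that(2)]] .
      moreover have "card (\<Union> (A ` T)) \<noteq> card T"
        using False that by blast
      ultimately show ?thesis by linarith
    qed
    show ?thesis
    proof (cases "I = {}")
      case False
      then obtain i where i: "i \<in> I" by blast
      have "card {i} \<le> card (A i)"
        using hall[of "{i}"] i by simp
      then obtain a where a: "a \<in> A i" by fastforce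
      have smaller: "card (I - {i}) < card I"
        using fin(1) i by (rule card_Diff1_less)
      obtain g where g: "inj_on g (I - {i})" "\<forall>j\<in>I - {i}. g j \<in> A j - {a}"
        using less.hyps[OF smaller, of "\<lambda>j. A j - {a}"] fin
          hall_condition_remove_slack[OF fin slack i] by auto
      show ?thesis
        using a g i by (intro distinct_representatives_glue[of "{i}" I "\<lambda>_. a" A g]) auto
    qed simp
  qed
qed

text \<open>Roommate \<open>i < n + 1\<close> holds the share \<open>X i j\<close> of room \<open>j < n\<close>.\<close>
definition fractional_assignment :: "nat \<Rightarrow> (nat \<Rightarrow> nat \<Rightarrow> real) \<Rightarrow> bool" where
  "fractional_assignment n X \<longleftrightarrow> (\<forall>i<Suc n. \<forall>j<n. 0 \<le> X i j) \<and> (\<forall>i<Suc n. (\<Sum>j<n. X i j) = 1) \<and>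
     (\<forall>j<n. (\<Sum>i<Suc n. X i j) = real (Suc n) / real n)"

lemma fractional_assignment_le_1:
  assumes "fractional_assignment n X" "i < Suc n" "j < n"
  shows "X i j \<le> 1"
proof -
  have "X i j \<le> (\<Sum>l<n. X i l)"
    using assms by (intro member_le_sum) (auto simp: fractional_assignment_def)
  then show ?thesis using assms by (simp add: fractional_assignment_def)
qed

lemma fractional_assignment_LIMSEQ:
  assumes "\<And>m. fractional_assignment n (Xs m)"
    and lim: "\<And>i j. i < Suc n \<Longrightarrow> j < n \<Longrightarrow> (\<lambda>m. Xs m i j) \<longlonglongrightarrow> X i j"
  shows "fractional_assignment n X"
proof -
  have "0 \<le> X i j" if "i < Suc n" "j < n" for i j
    using assms that by (intro LIMSEQ_le_const[OF lim]) (auto simp: fractional_assignment_def)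
  moreover have "(\<Sum>j<n. X i j) = 1" if "i < Suc n" for i
  proof -
    have "(\<lambda>m. \<Sum>j<n. Xs m i j) \<longlonglongrightarrow> (\<Sum>j<n. X i j)"
      using that by (intro tendsto_sum lim) auto
    then show ?thesis
      using assms(1) that by (simp add: fractional_assignment_def LIMSEQ_const_iff)
  qed
  moreover have "(\<Sum>i<Suc n. X i j) = real (Suc n) / real n" if "j < n" for j
  proof -
    have "(\<lambda>m. \<Sum>i<Suc n. Xs m i j) \<longlonglongrightarrow> (\<Sum>i<Suc n. X i j)"
      using that by (intro tendsto_sum lim) auto
    then show ?thesis
      using assms(1) that by (simp add: fractional_assignment_def LIMSEQ_const_iff)
  qed
  ultimately show ?thesis by (simp add: fractional_assignment_def)
qed

lemma fractional_assignment_hall_condition: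
  assumes X: "fractional_assignment n X" and n: "1 \<le> n"
    and rooms: "\<And>i. i < Suc n \<Longrightarrow> A i \<subseteq> {..<n}"
    and support: "\<And>i j. i < Suc n \<Longrightarrow> j < n \<Longrightarrow> 0 < X i j \<Longrightarrow> j \<in> A i"
    and T: "T \<subseteq> {..<Suc n}" "card T \<le> n"
  shows "card T \<le> card (\<Union> (A ` T))"
proof -
  define N where "N = \<Union> (A ` T)"
  have N: "N \<subseteq> {..<n}" using rooms T by (auto simp: N_def)
  have nonneg: "0 \<le> X i j" if "i \<in> T" "j < n" for i j
    using X T that by (auto simp: fractional_assignment_def)
  have "real (card T) = (\<Sum>i\<in>T. \<Sum>j<n. X i j)"
    using X T by (simp add: fractional_assignment_def subset_iff)
  also have "\<dots> = (\<Sum>i\<in>T. \<Sum>j\<in>N. X i j)"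
  proof (rule sum.cong[OF refl])
    fix i assume i: "i \<in> T"
    have "X i j = 0" if "j \<in> {..<n} - N" for j
      using support[of i j] nonneg[of i j] T i that by (force simp: N_def)
    then show "(\<Sum>j<n. X i j) = (\<Sum>j\<in>N. X i j)"
      by (intro sum.mono_neutral_right[OF _ N]) auto
  qed
  also have "\<dots> = (\<Sum>j\<in>N. \<Sum>i\<in>T. X i j)"
    by (rule sum.swap)
  also have "\<dots> \<le> (\<Sum>j\<in>N. \<Sum>i<Suc n. X i j)"
    using T N nonneg X by (intro sum_mono sum_mono2) (auto simp: fractional_assignment_def)
  also have "\<dots> = real (card N) * (real (Suc n) / real n)"
    using X N by (simp add: fractional_assignment_def subset_iff)
  finally have bound: "real (card T) \<le> real (card N) + real (card N) / real n"
    using n by (simp add: field_simps)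
  show ?thesis
  proof (cases "card N < n")
    case True
    then have "real (card N) / real n < 1" using n by simp
    then show ?thesis using bound by (simp add: N_def)
  qed (use T in \<open>simp add: N_def\<close>)
qed

lemma fractional_assignment_perfect_matching:
  assumes X: "fractional_assignment n X" and n: "1 \<le> n"
    and rooms: "\<And>i. i < Suc n \<Longrightarrow> A i \<subseteq> {..<n}"
    and support: "\<And>i j. i < Suc n \<Longrightarrow> j < n \<Longrightarrow> 0 < X i j \<Longrightarrow> j \<in> A i"
    and r: "r < Suc n"
  shows "\<exists>\<sigma>. bij_betw \<sigma> ({..<Suc n} - {r}) {..<n} \<and> (\<forall>i\<in>{..<Suc n} - {r}. \<sigma> i \<in> A i)"
proof -
  let ?I = "{..<Suc n} - {r}"
  have card: "card ?I = n" using r by simp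
  have "\<exists>\<sigma>. inj_on \<sigma> ?I \<and> (\<forall>i\<in>?I. \<sigma> i \<in> A i)"
  proof (rule hall_marriage)
    show "finite (A i)" if "i \<in> ?I" for i
      using rooms that by (auto intro: finite_subset)
    show "card T \<le> card (\<Union> (A ` T))" if "T \<subseteq> ?I" for T
    proof (rule fractional_assignment_hall_condition[OF X n rooms support])
      show "T \<subseteq> {..<Suc n}" using that by blast
      show "card T \<le> n" using card_mono[OF _ that] card by simp
    qed
  qed simp
  then obtain \<sigma> where \<sigma>: "inj_on \<sigma> ?I" "\<forall>i\<in>?I. \<sigma> i \<in> A i" by blast
  have "\<sigma> ` ?I \<subseteq> {..<n}" using \<sigma>(2) rooms by auto
  moreover have "card (\<sigma> ` ?I) = n" using card_image[OF \<sigma>(1)] card by simp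
  ultimately have "\<sigma> ` ?I = {..<n}" by (intro card_subset_eq) auto
  then show ?thesis using \<sigma> by (auto simp: bij_betw_def)
qed

section \<open>Rental harmony\<close>

locale rental_harmony =
  fixes n :: nat and R :: real and pref :: "nat \<Rightarrow> (nat \<Rightarrow> real) \<Rightarrow> nat set"
  assumes n: "1 \<le> n" and R: "0 \<le> R"
    and pref_rooms: "\<And>i p. i < Suc n \<Longrightarrow> rent_division n R p \<Longrightarrow> pref i p \<noteq> {} \<and> pref i p \<subseteq> {..<n}"
    and free_room: "\<And>i p j. i < Suc n \<Longrightarrow> rent_division n R p \<Longrightarrow> j < n \<Longrightarrow> p j = 0 \<Longrightarrow> j \<in> pref i p"
    and closed: "\<And>i j ps p. i < Suc n \<Longrightarrow> (\<forall>m. rent_division n R (ps m)) \<Longrightarrow>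
                   rent_division n R p \<Longrightarrow> (\<forall>l. (\<lambda>m. ps m l) \<longlonglongrightarrow> p l) \<Longrightarrow>
                   (\<forall>m. j \<in> pref i (ps m)) \<Longrightarrow> j \<in> pref i p"
begin

lemma rent_division_scaled: "q \<in> unit_simplex n \<Longrightarrow> rent_division n R (\<lambda>l. R * q l)"
  using R by (auto simp: rent_division_def unit_simplex_def sum_distrib_left[symmetric])

definition region :: "nat \<Rightarrow> nat \<Rightarrow> (nat \<Rightarrow> real) set" where
  "region i j = {q \<in> unit_simplex n. j \<in> pref i (\<lambda>l. R * q l)}"

lemma region_subset: "region i j \<subseteq> unit_simplex n"
  by (auto simp: region_def)

lemma ex_region:
  assumes "p \<in> unit_simplex n" "i < Suc n"
  obtains j where "j < n" "p \<in> region i j"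
  using pref_rooms[OF assms(2) rent_division_scaled[OF assms(1)]] assms(1)
  by (auto simp: region_def)

lemma free_room_region:
  assumes "p \<in> unit_simplex n" "i < Suc n" "j < n" "p j = 0"
  shows "p \<in> region i j"
  using free_room[OF assms(2) rent_division_scaled[OF assms(1)] assms(3)] assms by (simp add: region_def)

lemma region_closed:
  assumes i: "i < Suc n" and qs: "\<And>m. qs m \<in> region i j" and p: "p \<in> unit_simplex n"
    and lim: "\<And>l. (\<lambda>m. qs m l) \<longlonglongrightarrow> p l"
  shows "p \<in> region i j"
proof -
  have "j \<in> pref i (\<lambda>l. R * p l)"
  proof (rule closed[OF i])
    show "\<forall>m. rent_division n R (\<lambda>l. R * qs m l)"
      using qs region_subset rent_division_scaled by blast
    show "\<forall>l. (\<lambda>m. R * qs m l) \<longlonglongrightarrow> R * p l"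
      by (intro allI tendsto_mult tendsto_const lim)
    show "\<forall>m. j \<in> pref i (\<lambda>l. R * qs m l)"
      using qs by (simp add: region_def)
  qed (rule rent_division_scaled[OF p])
  with p show ?thesis by (simp add: region_def)
qed

text \<open>Roommate \<open>i\<close> puts weight \<open>e\<close> on each room she prefers, decaying continuously to \<open>0\<close> at
  distance \<open>e\<close> from the region where she prefers it; normalising gives a continuous
  fractional assignment that approximates her preferences.\<close>
definition weight :: "real \<Rightarrow> nat \<Rightarrow> nat \<Rightarrow> (nat \<Rightarrow> real) \<Rightarrow> real" where
  "weight e i j p = max 0 (e - l1_setdist n (region i j) p)"

definition share :: "real \<Rightarrow> (nat \<Rightarrow> real) \<Rightarrow> nat \<Rightarrow> nat \<Rightarrow> real" where
  "share e p i j = weight e i j p / (\<Sum>l<n. weight e i l p)"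

definition excess :: "real \<Rightarrow> (nat \<Rightarrow> real) \<Rightarrow> nat \<Rightarrow> real" where
  "excess e p j = (\<Sum>i<Suc n. share e p i j) - real (Suc n) / real n"

lemma weight_nonneg: "0 \<le> weight e i j p"
  by (simp add: weight_def)

lemma weight_le: "0 \<le> e \<Longrightarrow> weight e i j p \<le> e"
  using l1_setdist_nonneg[of n "region i j" p] by (simp add: weight_def)

lemma weight_region: "p \<in> region i j \<Longrightarrow> 0 \<le> e \<Longrightarrow> weight e i j p = e"
  by (simp add: weight_def l1_setdist_eq_0)

lemma share_nonneg: "0 \<le> share e p i j"
  by (simp add: share_def weight_nonneg sum_nonneg)

lemma weight_sum_bounds:
  assumes p: "p \<in> unit_simplex n" and i: "i < Suc n" and e: "0 \<le> e"
  shows "e \<le> (\<Sum>l<n. weight e i l p)" and "(\<Sum>l<n. weight e i l p) \<le> real n * e"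
proof -
  obtain j where j: "j < n" "p \<in> region i j" using ex_region[OF p i] .
  have "weight e i j p \<le> (\<Sum>l<n. weight e i l p)"
    using j by (intro member_le_sum) (auto simp: weight_nonneg)
  then show "e \<le> (\<Sum>l<n. weight e i l p)" using weight_region[OF j(2) e] by simp
  have "(\<Sum>l<n. weight e i l p) \<le> (\<Sum>l<n. e)" by (intro sum_mono weight_le e)
  then show "(\<Sum>l<n. weight e i l p) \<le> real n * e" by simp
qed

lemma share_row_sum:
  assumes "p \<in> unit_simplex n" "i < Suc n" "0 < e"
  shows "(\<Sum>j<n. share e p i j) = 1"
  using weight_sum_bounds(1)[OF assms(1,2), of e] assms(3)
  by (simp add: share_def sum_divide_distrib[symmetric])

lemma share_free_room:
  assumes p: "p \<in> unit_simplex n" and i: "i < Suc n" and e: "0 < e" and j: "j < n" "p j = 0"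
  shows "1 / real n \<le> share e p i j"
proof -
  have "e / (real n * e) \<le> e / (\<Sum>l<n. weight e i l p)"
    using weight_sum_bounds[OF p i, of e] e by (intro divide_left_mono) auto
  then show ?thesis
    using weight_region[OF free_room_region[OF p i j]] e n by (simp add: share_def)
qed

lemma excess_sum:
  assumes "p \<in> unit_simplex n" "0 < e"
  shows "(\<Sum>j<n. excess e p j) = 0"
proof -
  have "(\<Sum>j<n. \<Sum>i<Suc n. share e p i j) = (\<Sum>i<Suc n. \<Sum>j<n. share e p i j)"
    by (rule sum.swap)
  also have "\<dots> = real (Suc n)"
    using share_row_sum[OF assms(1) _ assms(2)] by simp
  finally show ?thesis
    using n by (simp add: excess_def sum_subtractf)
qed

lemma excess_free_room:
  assumes "p \<in> unit_simplex n" "0 < e" "j < n" "p j = 0"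
  shows "0 \<le> excess e p j"
proof -
  have "(\<Sum>i<Suc n. 1 / real n) \<le> (\<Sum>i<Suc n. share e p i j)"
    using share_free_room[OF assms(1) _ assms(2-4)] by (intro sum_mono) simp
  then show ?thesis by (simp add: excess_def)
qed

lemma share_tendsto:
  assumes "0 < e" and ps: "\<And>m. ps m \<in> unit_simplex n" and p: "p \<in> unit_simplex n"
    and lim: "\<And>l. (\<lambda>m. ps m l) \<longlonglongrightarrow> p l" and i: "i < Suc n"
  shows "(\<lambda>m. share e (ps m) i j) \<longlonglongrightarrow> share e p i j"
proof -
  have weight: "(\<lambda>m. weight e i l (ps m)) \<longlonglongrightarrow> weight e i l p" for l
    unfolding weight_def by (intro tendsto_max tendsto_diff tendsto_const l1_setdist_tendsto lim)
  have "(\<Sum>l<n. weight e i l p) \<noteq> 0"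
    using weight_sum_bounds(1)[OF p i, of e] \<open>0 < e\<close> by linarith
  then show ?thesis
    unfolding share_def by (intro tendsto_divide tendsto_sum weight)
qed

lemma excess_equilibrium:
  assumes "0 < e"
  obtains p where "p \<in> unit_simplex n" "\<And>j. j < n \<Longrightarrow> excess e p j = 0"
proof (rule excess_demand_equilibrium[OF n, of "excess e"])
  show "(\<lambda>m. excess e (ps m) j) \<longlonglongrightarrow> excess e p j"
    if "\<And>m. ps m \<in> unit_simplex n" "p \<in> unit_simplex n" "\<And>l. (\<lambda>m. ps m l) \<longlonglongrightarrow> p l" for ps p j
    unfolding excess_def using that by (intro tendsto_diff tendsto_sum tendsto_const share_tendsto assms) auto
qed (use that excess_sum[OF _ assms] excess_free_room[OF _ assms] in auto)

lemma approx_fractional_assignment: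
  assumes e: "0 < e"
  obtains p where "p \<in> unit_simplex n" "fractional_assignment n (share e p)"
    "\<And>i j. 0 < share e p i j \<Longrightarrow> l1_setdist n (region i j) p < e"
proof -
  obtain p where p: "p \<in> unit_simplex n" and eq: "\<And>j. j < n \<Longrightarrow> excess e p j = 0"
    using excess_equilibrium[OF e] by blast
  have "fractional_assignment n (share e p)"
    using share_row_sum[OF p _ e] eq share_nonneg
    by (simp add: fractional_assignment_def excess_def)
  moreover have "l1_setdist n (region i j) p < e" if "0 < share e p i j" for i j
  proof -
    have "weight e i j p \<noteq> 0" using that by (auto simp: share_def)
    then show ?thesis by (simp add: weight_def max_def split: if_splits)
  qed
  ultimately show thesis using that p by blast
qed

lemma region_of_limit:
  assumes i: "i < Suc n" and ps: "\<And>m. ps m \<in> unit_simplex n" and p: "p \<in> unit_simplex n"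
    and lim: "\<And>l. (\<lambda>m. ps m l) \<longlonglongrightarrow> p l" and e: "e \<longlonglongrightarrow> 0"
    and close: "\<forall>\<^sub>F m in sequentially. l1_setdist n (region i j) (ps m) < e m"
  shows "p \<in> region i j"
proof (rule l1_setdist_eq_0_imp_mem[OF region_subset _ p])
  show "p \<in> region i j" if "\<And>m. qs m \<in> region i j" "\<And>l. (\<lambda>m. qs m l) \<longlonglongrightarrow> p l" for qs
    using region_closed[OF i that(1) p that(2)] .
  have "l1_setdist n (region i j) p \<le> 0"
    using close by (intro tendsto_le[OF _ e l1_setdist_tendsto[OF lim]]) (auto elim: eventually_mono)
  then show "l1_setdist n (region i j) p = 0"
    using l1_setdist_nonneg[of n "region i j" p] by linarith
qed

lemma preference_fractional_assignment:
  obtains p X where "p \<in> unit_simplex n" "fractional_assignment n X"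
    "\<And>i j. i < Suc n \<Longrightarrow> j < n \<Longrightarrow> 0 < X i j \<Longrightarrow> p \<in> region i j"
proof -
  define e where "e m = 1 / real (Suc m)" for m
  have "\<exists>p. p \<in> unit_simplex n \<and> fractional_assignment n (share (e m) p) \<and>
          (\<forall>i j. 0 < share (e m) p i j \<longrightarrow> l1_setdist n (region i j) p < e m)" for m
  proof -
    have "0 < e m" by (simp add: e_def)
    then show ?thesis using approx_fractional_assignment by metis
  qed
  then obtain P where P: "\<And>m. P m \<in> unit_simplex n" "\<And>m. fractional_assignment n (share (e m) (P m))"
    and close: "\<And>m i j. 0 < share (e m) (P m) i j \<Longrightarrow> l1_setdist n (region i j) (P m) < e m"
    by metis
  obtain \<phi> p where \<phi>: "strict_mono \<phi>" and p: "p \<in> unit_simplex n"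
    and lim_p: "\<And>l. (\<lambda>m. P (\<phi> m) l) \<longlonglongrightarrow> p l"
    using unit_simplex_seq_compact[of P n] P(1) by metis
  define Y where "Y m ij = share (e (\<phi> m)) (P (\<phi> m)) (fst ij) (snd ij)" for m ij
  have "\<bar>Y m ij\<bar> \<le> 1" if "ij \<in> {..<Suc n} \<times> {..<n}" for m ij
    using fractional_assignment_le_1[OF P(2)] share_nonneg that by (auto simp: Y_def)
  then obtain \<psi> L where \<psi>: "strict_mono \<psi>"
    and lim_Y: "\<And>ij. ij \<in> {..<Suc n} \<times> {..<n} \<Longrightarrow> (\<lambda>m. Y (\<psi> m) ij) \<longlonglongrightarrow> L ij"
    using finite_bounded_convergent_subseq[of "{..<Suc n} \<times> {..<n}" Y 1] by blast
  define X where "X i j = L (i, j)" for i j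
  have lim_X: "(\<lambda>m. share (e (\<phi> (\<psi> m))) (P (\<phi> (\<psi> m))) i j) \<longlonglongrightarrow> X i j" if "i < Suc n" "j < n" for i j
    using lim_Y[of "(i, j)"] that by (simp add: X_def Y_def)
  show thesis
  proof (rule that[OF p fractional_assignment_LIMSEQ[OF P(2) lim_X]])
    fix i j assume ij: "i < Suc n" "j < n" and pos: "0 < X i j"
    show "p \<in> region i j"
    proof (rule region_of_limit[OF ij(1) P(1)])
      show "(\<lambda>m. P (\<phi> (\<psi> m)) l) \<longlonglongrightarrow> p l" for l
        using LIMSEQ_subseq_LIMSEQ[OF lim_p \<psi>] by (simp add: o_def)
      show "(\<lambda>m. e (\<phi> (\<psi> m))) \<longlonglongrightarrow> 0"
        using LIMSEQ_subseq_LIMSEQ[OF LIMSEQ_Suc[OF lim_1_over_n] strict_mono_o[OF \<phi> \<psi>]]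
        by (simp add: e_def o_def)
      show "\<forall>\<^sub>F m in sequentially. l1_setdist n (region i j) (P (\<phi> (\<psi> m))) < e (\<phi> (\<psi> m))"
        using order_tendstoD(1)[OF lim_X[OF ij] pos] by (auto elim: eventually_mono intro: close)
    qed (rule p)
  qed
qed

lemma envy_free_after_any_departure:
  "\<exists>p. rent_division n R p \<and> (\<forall>r<Suc n. \<exists>\<sigma>. envy_free_assignment pref p ({..<Suc n} - {r}) n \<sigma>)"
proof -
  obtain q X where q: "q \<in> unit_simplex n" and X: "fractional_assignment n X"
    and support: "\<And>i j. i < Suc n \<Longrightarrow> j < n \<Longrightarrow> 0 < X i j \<Longrightarrow> q \<in> region i j"
    using preference_fractional_assignment by metis
  let ?p = "\<lambda>l. R * q l"
  have "\<exists>\<sigma>. envy_free_assignment pref ?p ({..<Suc n} - {r}) n \<sigma>" if "r < Suc n" for r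
    unfolding envy_free_assignment_def
  proof (rule fractional_assignment_perfect_matching[OF X n _ _ that])
    show "pref i ?p \<subseteq> {..<n}" if "i < Suc n" for i
      using pref_rooms[OF that rent_division_scaled[OF q]] by blast
    show "j \<in> pref i ?p" if "i < Suc n" "j < n" "0 < X i j" for i j
      using support[OF that] by (simp add: region_def)
  qed
  then show ?thesis using rent_division_scaled[OF q] by blast
qed

end

theorem theorem2p4:
  fixes k :: nat and R :: real
    and pref :: "nat \<Rightarrow> (nat \<Rightarrow> real) \<Rightarrow> nat set"
  assumes k: "2 \<le> k"
    and R: "0 \<le> R"
    and pref_rooms: "\<And>i p. i < k \<Longrightarrow> rent_division (k - 1) R p \<Longrightarrow>
                        pref i p \<noteq> {} \<and> pref i p \<subseteq> {..<k - 1}"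
    and free_room: "\<And>i p j. i < k \<Longrightarrow> rent_division (k - 1) R p \<Longrightarrow> j < k - 1 \<Longrightarrow>
                        p j = 0 \<Longrightarrow> j \<in> pref i p"
    and closed: "\<And>i j ps p. i < k \<Longrightarrow> (\<forall>m. rent_division (k - 1) R (ps m)) \<Longrightarrow>
                        rent_division (k - 1) R p \<Longrightarrow>
                        (\<forall>l. (\<lambda>m. ps m l) \<longlonglongrightarrow> p l) \<Longrightarrow>
                        (\<forall>m. j \<in> pref i (ps m)) \<Longrightarrow> j \<in> pref i p"
  shows "\<exists>p. rent_division (k - 1) R p \<and>
           (\<forall>r<k. \<exists>\<sigma>. envy_free_assignment pref p ({..<k} - {r}) (k - 1) \<sigma>)"
proof -
  obtain n where k_eq: "k = Suc n" and n: "1 \<le> n"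
    using k by (cases k) auto
  interpret rental_harmony n R pref
    by unfold_locales (use n R pref_rooms free_room closed in \<open>simp_all add: k_eq\<close>)
  show ?thesis
    using envy_free_after_any_departure by (simp add: k_eq)
qed

end
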